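(* There exists a constant $\kappa_{19}>0$, depending only on $N,\gamma,\beta$, such that for any $x_0\in\mathbb R^N$ and any $s>0$, $$\kappa_{19}^{-1}s^{1/2}\big[s^{1/\sigma}\vee|x_0|\big]^{\frac{\gamma-\beta}2}\le\big(\rho^{\gamma,\beta}_{x_0}\big)^{-1}(s)\le\kappa_{19}s^{1/2}\big[s^{1/\sigma}\vee|x_0|\big]^{\frac{\gamma-\beta}2}.$$ Consequently, for any open $\Omega\subseteq\mathbb R^N$, any $T>0$, any $x_0\in\Omega$ and any $s\in(0,T]$: $(\rho^{\gamma,\beta}_{x_0})^{-1}(s)\le\kappa_{19}s^{1/\sigma}$ if $\sigma\ge2$, and $(\rho^{\gamma,\beta}_{x_0})^{-1}(s)\le\kappa_{19}s^{1/2}\big(T^{1/\sigma}\vee\sup_{z\in\Omega}|z|\big)^{\frac{\gamma-\beta}2}$ if $0<\sigma<2$.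
   Context: $N\ge3$ and $\gamma,\beta\in\mathbb R$ satisfy $\gamma<N$ and $\gamma-2<\beta\le\frac{N-2}{N}\gamma$; $\sigma=2+\beta-\gamma$. $\rho^{\gamma,\beta}_{x_0}(R)=\big(\int_{B_R(x_0)}|x|^{(\beta-\gamma)N/2}dx\big)^{2/N}$ for $R>0$; it is increasing in $R$ and $(\rho^{\gamma,\beta}_{x_0})^{-1}$ denotes its inverse function. $a\vee b=\max\{a,b\}$. *)

theory Defs
  imports "HOL-Analysis.Analysis"
begin

definition rho_gb :: "real \<Rightarrow> real \<Rightarrow> real ^ 'n \<Rightarrow> real \<Rightarrow> real" where
  "rho_gb \<gamma> \<beta> x0 R =
     (LINT x : ball x0 R | lborel. norm x powr ((\<beta> - \<gamma>) * real CARD('n) / 2))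
       powr (2 / real CARD('n))"

text \<open>Its inverse function (rho is increasing on (0,infinity)).\<close>
definition rho_gb_inv :: "real \<Rightarrow> real \<Rightarrow> real ^ 'n \<Rightarrow> real \<Rightarrow> real" where
  "rho_gb_inv \<gamma> \<beta> x0 s = (THE R. 0 < R \<and> rho_gb \<gamma> \<beta> x0 R = s)"

end

theory Submission
  imports Defs
begin

text \<open>Put \<open>b = \<gamma> - \<beta> < 2\<close> and \<open>a = -b N / 2 > -N\<close>, so that \<open>\<rho>(R)\<close> is the \<open>2/N\<close>-th power of
  the integral of \<open>|x|^a\<close> over \<open>B(x0,R)\<close>. That integral is comparable to
  \<open>R^N (R \<or> |x0|)^a\<close>: from below through a ball of radius \<open>R/4\<close> on which \<open>|x| \<approx> R \<or> |x0|\<close>;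
  from above by the same comparison, or, when the ball reaches the singularity of the weight,
  by a dyadic decomposition around the origin. Hence \<open>\<rho>(R) \<approx> R^2 (R \<or> |x0|)^-b\<close>. This model
  function has the explicit inverse \<open>s^(1/2) (s^(1/\<sigma>) \<or> |x0|)^(b/2)\<close> and grows at least like
  \<open>K^min(2,\<sigma>)\<close> under dilation by \<open>K \<ge> 1\<close>, so the comparison passes to the inverse
  functions with constants independent of \<open>x0\<close>.\<close>

subsection \<open>Integrals of powers of the norm over balls\<close>

lemma powr_comparable:
  fixes a c d t :: real
  assumes "0 < d" "0 < t" "1 \<le> c" "d \<le> c * t" "t \<le> c * d"
  shows "c powr (- \<bar>a\<bar>) * d powr a \<le> t powr a \<and> t powr a \<le> c powr \<bar>a\<bar> * d powr a"
proof (cases "0 \<le> a")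
  case True
  have "c powr (- a) * d powr a = (d / c) powr a"
    using assms by (simp add: powr_divide powr_minus_divide)
  also have "\<dots> \<le> t powr a"
    using assms True by (intro powr_mono2) (auto simp: field_simps)
  finally have "c powr (- a) * d powr a \<le> t powr a" .
  moreover have "t powr a \<le> (c * d) powr a"
    using assms True by (intro powr_mono2) auto
  ultimately show ?thesis
    using True assms by (simp add: powr_mult)
next
  case False
  have "c powr a * d powr a \<le> t powr a"
    using assms False by (subst powr_mult[symmetric]) (auto intro: powr_mono2')
  moreover have "t powr a \<le> (d / c) powr a"
    using assms False by (intro powr_mono2') (auto simp: field_simps)
  ultimately show ?thesis
    using False assms by (simp add: powr_divide powr_minus_divide)
qed

lemma dyadic_shell:
  fixes t \<rho> :: real
  assumes "0 < t" "t < \<rho>"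
  shows "\<exists>k. \<rho> / 2 ^ Suc k \<le> t \<and> t < \<rho> / 2 ^ k"
proof -
  obtain j :: nat where "\<rho> / t < 2 ^ j"
    using real_arch_pow[of 2 "\<rho> / t"] by auto
  then have ex: "\<exists>k. \<rho> / 2 ^ Suc k \<le> t"
    using assms by (intro exI[of _ j]) (simp add: field_simps)
  define k where "k = (LEAST k. \<rho> / 2 ^ Suc k \<le> t)"
  have "\<rho> / 2 ^ Suc k \<le> t"
    unfolding k_def by (rule LeastI_ex[OF ex])
  moreover have "t < \<rho> / 2 ^ k"
  proof (cases k)
    case (Suc m)
    then show ?thesis
      using not_less_Least[of m "\<lambda>k. \<rho> / 2 ^ Suc k \<le> t"] by (simp add: k_def)
  qed (use assms in simp)
  ultimately show ?thesis by blast
qed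

lemma exists_unit_vector_along:
  "\<exists>u::'a::euclidean_space. norm u = 1 \<and> z = norm z *\<^sub>R u"
proof (cases "z = 0")
  case True
  obtain b :: 'a where "b \<in> Basis" using nonempty_Basis by blast
  with True show ?thesis by (intro exI[of _ b]) auto
next
  case False
  then show ?thesis by (intro exI[of _ "sgn z"]) (simp add: norm_sgn sgn_div_norm)
qed

definition ball_norm_powr_integral :: "real \<Rightarrow> 'a::euclidean_space \<Rightarrow> real \<Rightarrow> real" where
  "ball_norm_powr_integral a z R = (LINT x|lborel. indicator (ball z R) x * norm x powr a)"

lemma borel_measurable_ball_norm_powr:
  "(\<lambda>x::'a::euclidean_space. indicator (ball z R) x * norm x powr a) \<in> borel_measurable lborel"
proof -
  have "(\<lambda>x::'a. indicator (ball z R) x * norm x powr a) \<in> borel_measurable borel"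
    by (intro borel_measurable_times borel_measurable_indicator) (simp, measurable)
  then show ?thesis by simp
qed

lemma dyadic_term_eq:
  fixes \<rho> a V :: real and n k :: nat
  assumes "0 < \<rho>"
  shows "(\<rho> / 2 ^ Suc k) powr a * (V * (\<rho> / 2 ^ k) ^ n)
    = V * 2 powr (- a) * \<rho> powr (n + a) * (2 powr (- (n + a))) ^ k"
proof -
  have "(2::real) ^ Suc k = 2 powr (real k + 1)"
    using powr_realpow[of 2 "Suc k"] by (simp add: add.commute)
  then have e1: "(\<rho> / 2 ^ Suc k) powr a = \<rho> powr a * 2 powr (- a) * 2 powr (- a * k)"
    using assms by (simp add: powr_divide powr_powr powr_minus_divide powr_add[symmetric] algebra_simps)
  have e2: "(\<rho> / 2 ^ k) ^ n = \<rho> powr n * 2 powr (- n * k)"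
    using assms by (simp add: power_divide powr_realpow[symmetric] powr_powr powr_minus_divide
        power_mult[symmetric] flip: of_nat_mult) (metis mult.commute)
  have e3: "(2 powr (- (n + a))) ^ k = (2::real) powr (- (n + a) * k)"
    by (simp add: powr_power[symmetric] mult.commute)
  show ?thesis
    unfolding e1 e2 e3 using assms
    by (simp add: powr_add algebra_simps powr_diff powr_minus divide_inverse)
qed

lemma indicator_norm_powr_le_dyadic_sum:
  fixes a \<rho> :: real
  assumes a: "a < 0" and \<rho>: "0 < \<rho>"
  shows "ennreal (indicator (ball (0::'a::real_normed_vector) \<rho>) x * norm x powr a)
    \<le> (\<Sum>k. ennreal ((\<rho> / 2 ^ Suc k) powr a * indicator (ball (0::'a) (\<rho> / 2 ^ k)) x))"
proof -
  define c where "c k = (\<rho> / 2 ^ Suc k) powr a" for k :: nat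
  have "ennreal (indicator (ball (0::'a) \<rho>) x * norm x powr a)
      \<le> (\<Sum>k. ennreal (c k * indicator (ball (0::'a) (\<rho> / 2 ^ k)) x))"
  proof (cases "x \<in> ball 0 \<rho> \<and> x \<noteq> 0")
    case True
    then obtain k where k: "\<rho> / 2 ^ Suc k \<le> norm x" "norm x < \<rho> / 2 ^ k"
      using dyadic_shell[of "norm x" \<rho>] by auto
    have "norm x powr a \<le> c k"
      unfolding c_def using k a \<rho> by (intro powr_mono2') auto
    with True k have "ennreal (indicator (ball (0::'a) \<rho>) x * norm x powr a)
        \<le> ennreal (c k * indicator (ball (0::'a) (\<rho> / 2 ^ k)) x)"
      by (auto simp: indicator_def intro!: ennreal_leI)
    also have "\<dots> \<le> (\<Sum>k. ennreal (c k * indicator (ball (0::'a) (\<rho> / 2 ^ k)) x))"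
      using sum_le_suminf[of "\<lambda>k. ennreal (c k * indicator (ball (0::'a) (\<rho> / 2 ^ k)) x)" "{k}"]
      by simp
    finally show ?thesis .
  qed (auto simp: indicator_def)
  then show ?thesis unfolding c_def .
qed

text \<open>Split the ball into the dyadic shells \<open>\<rho>/2^(k+1) \<le> |x| < \<rho>/2^k\<close>; on the \<open>k\<close>-th shell
  the weight is at most \<open>(\<rho>/2^(k+1))^a\<close>, and the resulting series is geometric with ratio
  \<open>2^-(n+a) < 1\<close>.\<close>
lemma nn_integral_ball_norm_powr_origin_le:
  fixes a \<rho> :: real
  assumes a: "a < 0" "- real DIM('a::euclidean_space) < a" and \<rho>: "0 < \<rho>"
  shows "(\<integral>\<^sup>+x. ennreal (indicator (ball (0::'a) \<rho>) x * norm x powr a) \<partial>lborel)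
     \<le> ennreal (unit_ball_vol DIM('a) * 2 powr (- a) / (1 - 2 powr (- (DIM('a) + a)))
                  * \<rho> powr (DIM('a) + a))"
proof -
  define n where "n = DIM('a)"
  define V where "V = unit_ball_vol n"
  define c where "c k = (\<rho> / 2 ^ Suc k) powr a" for k :: nat
  define q where "q = (2::real) powr (- (n + a))"
  have q: "0 < q" "q < 1"
    unfolding q_def using a n_def powr_less_mono[of "- (n + a)" 0 "2::real"] by auto
  have V: "0 < V" unfolding V_def by simp
  have ball_term: "(\<integral>\<^sup>+x. ennreal (c k * indicator (ball (0::'a) (\<rho> / 2 ^ k)) x) \<partial>lborel)
      = ennreal (c k * (V * (\<rho> / 2 ^ k) ^ n))" for k
  proof -
    have "(\<lambda>x. ennreal (c k * indicator (ball (0::'a) (\<rho> / 2 ^ k)) x))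
        = (\<lambda>x. ennreal (c k) * indicator (ball (0::'a) (\<rho> / 2 ^ k)) x)"
      by (auto simp: indicator_def)
    then show ?thesis
      using \<rho> by (simp add: nn_integral_cmult_indicator emeasure_ball V_def n_def c_def ennreal_mult)
  qed
  have "(\<integral>\<^sup>+x. ennreal (indicator (ball (0::'a) \<rho>) x * norm x powr a) \<partial>lborel)
     \<le> (\<integral>\<^sup>+x. (\<Sum>k. ennreal (c k * indicator (ball (0::'a) (\<rho> / 2 ^ k)) x)) \<partial>lborel)"
    unfolding c_def by (rule nn_integral_mono) (rule indicator_norm_powr_le_dyadic_sum[OF a(1) \<rho>])
  also have "\<dots> = (\<Sum>k. ennreal (c k * (V * (\<rho> / 2 ^ k) ^ n)))"
    unfolding ball_term[symmetric]
    by (rule nn_integral_suminf) (intro measurable_compose[OF _ measurable_ennreal]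
        borel_measurable_times borel_measurable_const borel_measurable_indicator, simp)
  also have "(\<lambda>k. c k * (V * (\<rho> / 2 ^ k) ^ n)) = (\<lambda>k. V * 2 powr (- a) * \<rho> powr (n + a) * q ^ k)"
    unfolding c_def q_def using dyadic_term_eq[OF \<rho>] by blast
  also have "(\<Sum>k. ennreal (V * 2 powr (- a) * \<rho> powr (n + a) * q ^ k))
      = ennreal (V * 2 powr (- a) * \<rho> powr (n + a) * (1 / (1 - q)))"
    using q V by (intro suminf_ennreal_eq sums_mult geometric_sums) auto
  finally show ?thesis unfolding q_def n_def V_def by (simp add: field_simps)
qed

lemma nn_integral_ball_norm_powr_finite:
  assumes a: "- real DIM('a::euclidean_space) < a"
  shows "(\<integral>\<^sup>+x. ennreal (indicator (ball (z::'a) R) x * norm x powr a) \<partial>lborel) < \<infinity>"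
proof -
  define \<rho> where "\<rho> = norm z + \<bar>R\<bar> + 1"
  have \<rho>: "0 < \<rho>" unfolding \<rho>_def by (simp add: add_nonneg_pos)
  have "ball z R \<subseteq> ball 0 \<rho>"
  proof
    fix x assume "x \<in> ball z R"
    then have "norm (x - z) < R" by (simp add: dist_norm norm_minus_commute)
    then show "x \<in> ball 0 \<rho>"
      unfolding \<rho>_def using norm_triangle_sub[of x z] by simp
  qed
  then have "(\<integral>\<^sup>+x. ennreal (indicator (ball z R) x * norm x powr a) \<partial>lborel)
      \<le> (\<integral>\<^sup>+x. ennreal (indicator (ball (0::'a) \<rho>) x * norm x powr a) \<partial>lborel)"
    by (intro nn_integral_mono ennreal_leI) (auto simp: indicator_def)
  also have "\<dots> < \<infinity>"
  proof (cases "a < 0")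
    case True
    show ?thesis
      using nn_integral_ball_norm_powr_origin_le[OF True a \<rho>] by (simp add: order_le_less_trans)
  next
    case False
    have "(\<integral>\<^sup>+x. ennreal (indicator (ball (0::'a) \<rho>) x * norm x powr a) \<partial>lborel)
       \<le> (\<integral>\<^sup>+x. ennreal (\<rho> powr a) * indicator (ball (0::'a) \<rho>) x \<partial>lborel)"
      using False by (intro nn_integral_mono) (auto simp: indicator_def intro!: ennreal_leI powr_mono2)
    also have "\<dots> = ennreal (\<rho> powr a) * emeasure lborel (ball (0::'a) \<rho>)"
      by (simp add: nn_integral_cmult_indicator)
    also have "\<dots> < \<infinity>"
      using emeasure_lborel_ball_finite[of "0::'a" \<rho>] by (simp add: ennreal_mult_less_top)
    finally show ?thesis .
  qed
  finally show ?thesis .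
qed

lemma integrable_ball_norm_powr:
  assumes "- real DIM('a::euclidean_space) < a"
  shows "integrable lborel (\<lambda>x. indicator (ball (z::'a) R) x * norm x powr a)"
  by (rule integrableI_nonneg[OF borel_measurable_ball_norm_powr _
        nn_integral_ball_norm_powr_finite[OF assms]]) auto

lemma ball_norm_powr_integral_origin_le:
  fixes a \<rho> :: real
  assumes a: "a < 0" "- real DIM('a::euclidean_space) < a" and \<rho>: "0 < \<rho>"
  shows "ball_norm_powr_integral a (0::'a) \<rho>
    \<le> unit_ball_vol DIM('a) * 2 powr (- a) / (1 - 2 powr (- (DIM('a) + a))) * \<rho> powr (DIM('a) + a)"
proof -
  have "2 powr (- (DIM('a) + a)) < (1::real)"
    using a powr_less_mono[of "- (DIM('a) + a)" 0 "2::real"] by auto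
  then show ?thesis
    unfolding ball_norm_powr_integral_def
    using nn_integral_ball_norm_powr_origin_le[OF a \<rho>]
    by (subst integral_eq_nn_integral[OF borel_measurable_ball_norm_powr]) (auto intro: enn2real_leI)
qed

lemma ball_norm_powr_integral_mono:
  assumes "- real DIM('a::euclidean_space) < a" "ball (z::'a) R \<subseteq> ball w R'"
  shows "ball_norm_powr_integral a z R \<le> ball_norm_powr_integral a w R'"
  unfolding ball_norm_powr_integral_def using assms(2)
  by (intro integral_mono integrable_ball_norm_powr assms(1)) (auto simp: indicator_def)

lemma ball_norm_powr_integral_le_const:
  assumes "- real DIM('a::euclidean_space) < a" "0 \<le> R"
    and "\<And>x. x \<in> ball (z::'a) R \<Longrightarrow> norm x powr a \<le> C"
  shows "ball_norm_powr_integral a z R \<le> C * (unit_ball_vol DIM('a) * R ^ DIM('a))"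
proof -
  have "ball_norm_powr_integral a z R \<le> (LINT x|lborel. C * indicator (ball z R) x)"
    unfolding ball_norm_powr_integral_def using assms emeasure_lborel_ball_finite[of z R]
    by (intro integral_mono integrable_ball_norm_powr integrable_mult_right integrable_real_indicator)
      (auto simp: indicator_def)
  also have "\<dots> = C * (unit_ball_vol DIM('a) * R ^ DIM('a))"
    using assms(2) by (simp add: content_ball)
  finally show ?thesis .
qed

lemma const_le_ball_norm_powr_integral:
  assumes "- real DIM('a::euclidean_space) < a" "0 \<le> r" "ball y r \<subseteq> ball (z::'a) R"
    and "\<And>x. x \<in> ball y r \<Longrightarrow> C \<le> norm x powr a"
  shows "C * (unit_ball_vol DIM('a) * r ^ DIM('a)) \<le> ball_norm_powr_integral a z R"
proof -
  have "C * (unit_ball_vol DIM('a) * r ^ DIM('a)) = (LINT x|lborel. C * indicator (ball y r) x)"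
    using assms(2) by (simp add: content_ball)
  also have "\<dots> \<le> ball_norm_powr_integral a z R"
    unfolding ball_norm_powr_integral_def using assms emeasure_lborel_ball_finite[of y r]
    by (intro integral_mono integrable_ball_norm_powr integrable_mult_right integrable_real_indicator)
      (auto simp: indicator_def)
  finally show ?thesis .
qed

lemma subball_norm_comparable:
  fixes z :: "'a::euclidean_space"
  assumes R: "0 < R"
  obtains y where "ball y (R / 4) \<subseteq> ball z R"
    and "\<And>x. x \<in> ball y (R / 4) \<Longrightarrow> max R (norm z) \<le> 4 * norm x \<and> norm x \<le> 4 * max R (norm z)"
proof -
  obtain u :: 'a where u: "norm u = 1" "z = norm z *\<^sub>R u"
    using exists_unit_vector_along by blast
  define y where "y = z + (R / 2) *\<^sub>R u"
  have "y = (norm z + R / 2) *\<^sub>R u"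
    unfolding y_def by (metis u(2) scaleR_add_left)
  then have y: "norm y = norm z + R / 2"
    using u R by simp
  have zy: "dist z y = R / 2"
    unfolding y_def using u R by (simp add: dist_norm)
  have "ball y (R / 4) \<subseteq> ball z R"
  proof
    fix x assume "x \<in> ball y (R / 4)"
    then show "x \<in> ball z R" using zy dist_triangle[of z x y] R by simp
  qed
  moreover have "max R (norm z) \<le> 4 * norm x \<and> norm x \<le> 4 * max R (norm z)"
    if "x \<in> ball y (R / 4)" for x
  proof -
    have "norm y - R / 4 < norm x" "norm x < norm y + R / 4"
      using that norm_triangle_sub[of y x] norm_triangle_sub[of x y]
      by (auto simp: dist_norm norm_minus_commute)
    then have lo: "R / 4 + norm z < norm x" and hi: "norm x < 3 * R / 4 + norm z"
      using y by linarith+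
    have "max R (norm z) \<le> 4 * norm x"
      using lo R norm_ge_zero[of z] by (intro max.boundedI) linarith+
    moreover have "norm x \<le> 4 * max R (norm z)"
      using hi R max.cobounded1[of R "norm z"] max.cobounded2[of "norm z" R] by linarith
    ultimately show ?thesis ..
  qed
  ultimately show ?thesis using that by blast
qed

lemma ball_norm_powr_integral_lower:
  assumes a: "- real DIM('a::euclidean_space) < a"
  shows "\<exists>c>0. \<forall>(z::'a) R. 0 < R \<longrightarrow>
    c * (R ^ DIM('a) * max R (norm z) powr a) \<le> ball_norm_powr_integral a z R"
proof -
  define c where "c = 4 powr (- \<bar>a\<bar>) * unit_ball_vol DIM('a) / 4 ^ DIM('a)"
  have "c * (R ^ DIM('a) * max R (norm z) powr a) \<le> ball_norm_powr_integral a z R"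
    if R: "0 < R" for z :: 'a and R
  proof -
    define d where "d = max R (norm z)"
    obtain y where sub: "ball y (R / 4) \<subseteq> ball z R"
      and cmp: "\<And>x. x \<in> ball y (R / 4) \<Longrightarrow> d \<le> 4 * norm x \<and> norm x \<le> 4 * d"
      using subball_norm_comparable[OF R] unfolding d_def by blast
    have "4 powr (- \<bar>a\<bar>) * d powr a \<le> norm x powr a" if "x \<in> ball y (R / 4)" for x
    proof -
      have "0 < d" using R by (simp add: d_def)
      with cmp[OF that] have "0 < norm x" by linarith
      with cmp[OF that] \<open>0 < d\<close> show ?thesis
        using powr_comparable[of d "norm x" 4 a] by simp
    qed
    then have "4 powr (- \<bar>a\<bar>) * d powr a * (unit_ball_vol DIM('a) * (R / 4) ^ DIM('a))
        \<le> ball_norm_powr_integral a z R"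
      using sub R by (intro const_le_ball_norm_powr_integral a) auto
    then show ?thesis
      by (simp add: c_def d_def power_divide algebra_simps)
  qed
  moreover have "0 < c" by (simp add: c_def)
  ultimately show ?thesis by blast
qed

lemma norm_powr_le_on_ball:
  fixes z :: "'a::real_normed_vector"
  assumes x: "x \<in> ball z R" and R: "0 < R" and regular: "0 \<le> a \<or> 2 * R < norm z"
  shows "norm x powr a \<le> 2 powr \<bar>a\<bar> * max R (norm z) powr a"
proof -
  define d where "d = max R (norm z)"
  have d: "0 < d" "R \<le> d" "norm z \<le> d" using R by (auto simp: d_def)
  have x_near: "norm z - R < norm x" "norm x < norm z + R"
    using x norm_triangle_sub[of z x] norm_triangle_sub[of x z]
    by (auto simp: dist_norm norm_minus_commute)
  show ?thesis
  proof (cases "0 \<le> a")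
    case True
    then have "norm x powr a \<le> (2 * d) powr a"
      using x_near d by (intro powr_mono2) auto
    then show ?thesis using True d by (simp add: powr_mult d_def)
  next
    case False
    with regular have "d = norm z" "2 * R < norm z"
      using R by (auto simp: d_def)
    moreover from this have "d \<le> 2 * norm x" "norm x \<le> 2 * d" "0 < norm x"
      using x_near R by linarith+
    ultimately show ?thesis
      using powr_comparable[of d "norm x" 2 a] d(1) by (simp add: d_def)
  qed
qed

text \<open>The ball lies in \<open>B(0,3R)\<close>, where the dyadic bound applies.\<close>
lemma ball_norm_powr_integral_le_near_origin:
  fixes a :: real and z :: "'a::euclidean_space"
  defines "C \<equiv> unit_ball_vol DIM('a) * 2 powr (- a) / (1 - 2 powr (- (DIM('a) + a)))"
  assumes a_neg: "a < 0" and a: "- real DIM('a) < a" and R: "0 < R" and near: "norm z \<le> 2 * R"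
  shows "ball_norm_powr_integral a z R
    \<le> C * 3 powr (DIM('a) + a) * 2 powr (- a) * (R ^ DIM('a) * max R (norm z) powr a)"
proof -
  define n where "n = DIM('a)"
  define d where "d = max R (norm z)"
  have d: "0 < d" "d \<le> 2 * R" using R near by (auto simp: d_def)
  have "2 powr (- (n + a)) < (1::real)"
    using a powr_less_mono[of "- (n + a)" 0 "2::real"] unfolding n_def by auto
  then have "0 < C" by (simp add: C_def n_def)
  have "ball z R \<subseteq> ball 0 (3 * R)"
  proof
    fix x assume "x \<in> ball z R"
    then have "norm (x - z) < R" by (simp add: dist_norm norm_minus_commute)
    then show "x \<in> ball 0 (3 * R)"
      using near norm_triangle_sub[of x z] by simp
  qed
  then have "ball_norm_powr_integral a z R \<le> ball_norm_powr_integral a (0::'a) (3 * R)"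
    by (rule ball_norm_powr_integral_mono[OF a])
  also have "\<dots> \<le> C * (3 * R) powr (n + a)"
    using ball_norm_powr_integral_origin_le[OF a_neg a, of "3 * R"] R by (simp add: C_def n_def)
  also have "\<dots> = C * 3 powr (n + a) * (R ^ n * R powr a)"
    using R by (simp add: powr_mult powr_add powr_realpow)
  also have "\<dots> \<le> C * 3 powr (n + a) * (R ^ n * (d / 2) powr a)"
    using \<open>0 < C\<close> R d a_neg by (intro mult_left_mono powr_mono2') auto
  also have "\<dots> = C * 3 powr (n + a) * 2 powr (- a) * (R ^ n * d powr a)"
    using d by (simp add: powr_divide powr_minus_divide)
  finally show ?thesis unfolding n_def d_def .
qed

lemma ball_norm_powr_integral_upper:
  assumes a: "- real DIM('a::euclidean_space) < a"
  shows "\<exists>c>0. \<forall>(z::'a) R. 0 < R \<longrightarrow>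
    ball_norm_powr_integral a z R \<le> c * (R ^ DIM('a) * max R (norm z) powr a)"
proof -
  define C where "C = unit_ball_vol DIM('a) * 2 powr (- a) / (1 - 2 powr (- (DIM('a) + a)))"
  define c where "c = max (2 powr \<bar>a\<bar> * unit_ball_vol DIM('a)) (C * 3 powr (DIM('a) + a) * 2 powr (- a))"
  have "ball_norm_powr_integral a z R \<le> c * (R ^ DIM('a) * max R (norm z) powr a)"
    if R: "0 < R" for z :: 'a and R
  proof (cases "0 \<le> a \<or> 2 * R < norm z")
    case True
    then have "ball_norm_powr_integral a z R
        \<le> 2 powr \<bar>a\<bar> * max R (norm z) powr a * (unit_ball_vol DIM('a) * R ^ DIM('a))"
      using R by (intro ball_norm_powr_integral_le_const a norm_powr_le_on_ball) auto
    also have "\<dots> = 2 powr \<bar>a\<bar> * unit_ball_vol DIM('a) * (R ^ DIM('a) * max R (norm z) powr a)"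
      by (simp add: algebra_simps)
    also have "\<dots> \<le> c * (R ^ DIM('a) * max R (norm z) powr a)"
      using R by (intro mult_right_mono) (auto simp: c_def)
    finally show ?thesis .
  next
    case False
    then have "ball_norm_powr_integral a z R
        \<le> C * 3 powr (DIM('a) + a) * 2 powr (- a) * (R ^ DIM('a) * max R (norm z) powr a)"
      using R by (intro ball_norm_powr_integral_le_near_origin[OF _ a, folded C_def]) auto
    also have "\<dots> \<le> c * (R ^ DIM('a) * max R (norm z) powr a)"
      using R by (intro mult_right_mono) (auto simp: c_def)
    finally show ?thesis .
  qed
  moreover have "0 < c" by (simp add: c_def less_max_iff_disj)
  ultimately show ?thesis by blast
qed

lemma ball_norm_powr_integral_pos:
  assumes a: "- real DIM('a::euclidean_space) < a" and R: "0 < R"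
  shows "0 < ball_norm_powr_integral a (z::'a) R"
proof -
  obtain c where "0 < c"
    and "c * (R ^ DIM('a) * max R (norm z) powr a) \<le> ball_norm_powr_integral a z R"
    using ball_norm_powr_integral_lower[OF a] R by blast
  moreover have "0 < c * (R ^ DIM('a) * max R (norm z) powr a)"
    using \<open>0 < c\<close> R by simp
  ultimately show ?thesis by linarith
qed

lemma ball_norm_powr_integral_strict_mono:
  assumes a: "- real DIM('a::euclidean_space) < a" and R: "0 < R" "R < R'"
  shows "ball_norm_powr_integral a (z::'a) R < ball_norm_powr_integral a z R'"
proof -
  obtain u :: 'a where u: "norm u = 1"
    using vector_choose_size[of 1] by auto
  define \<delta> where "\<delta> = (R' - R) / 2"
  define w where "w = z + ((R + R') / 2) *\<^sub>R u"
  have \<delta>: "0 < \<delta>" unfolding \<delta>_def using R by simp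
  have zw: "dist z w = (R + R') / 2" unfolding w_def using u R by (simp add: dist_norm)
  have in_shell: "R \<le> dist z x \<and> dist z x < R'" if "x \<in> ball w \<delta>" for x
    using that zw dist_triangle[of z x w] dist_triangle[of z w x]
    by (auto simp: \<delta>_def dist_commute)
  have "ball_norm_powr_integral a z R + ball_norm_powr_integral a w \<delta>
      = (LINT x|lborel. indicator (ball z R) x * norm x powr a + indicator (ball w \<delta>) x * norm x powr a)"
    unfolding ball_norm_powr_integral_def
    by (subst Bochner_Integration.integral_add) (auto intro: integrable_ball_norm_powr[OF a])
  also have "\<dots> \<le> ball_norm_powr_integral a z R'"
    unfolding ball_norm_powr_integral_def using R in_shell
    by (intro integral_mono Bochner_Integration.integrable_add integrable_ball_norm_powr a)
      (fastforce simp: indicator_def)+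
  finally show ?thesis
    using ball_norm_powr_integral_pos[OF a \<delta>, of w] by linarith
qed

text \<open>Dominated convergence; the sphere \<open>\<partial>B(z,R)\<close>, where the indicators need not converge,
  is a null set.\<close>
lemma isCont_ball_norm_powr_integral:
  assumes a: "- real DIM('a::euclidean_space) < a"
  shows "isCont (ball_norm_powr_integral a (z::'a)) R"
  unfolding continuous_at_sequentially comp_def
proof (intro allI impI)
  fix X :: "nat \<Rightarrow> real" assume X: "X \<longlonglongrightarrow> R"
  obtain K where K: "\<And>i. norm (X i) \<le> K"
    using convergent_imp_Bseq[OF convergentI[OF X]] BseqE by metis
  have "sphere z R \<in> null_sets lborel"
    using negligible_sphere[of z R]
    by (auto simp: null_sets_completion_iff negligible_iff_null_sets negligible_convex_frontier)
  from AE_not_in[OF this]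
  have AE_conv: "AE x in lborel. (\<lambda>i. indicator (ball z (X i)) x * norm x powr a)
      \<longlonglongrightarrow> indicator (ball z R) x * norm x powr a"
  proof eventually_elim
    fix x assume "x \<notin> sphere z R"
    have "\<forall>\<^sub>F i in sequentially. dist z x < X i \<longleftrightarrow> dist z x < R"
    proof (cases "dist z x < R")
      case True
      then show ?thesis using order_tendstoD(1)[OF X True] by (auto elim: eventually_mono)
    next
      case False
      with \<open>x \<notin> sphere z R\<close> have "R < dist z x" by auto
      from order_tendstoD(2)[OF X this] False show ?thesis by (auto elim: eventually_mono)
    qed
    then have "\<forall>\<^sub>F i in sequentially. indicator (ball z (X i)) x * norm x powr a
        = indicator (ball z R) x * norm x powr a"
      by eventually_elim (simp add: indicator_def)
    then show "(\<lambda>i. indicator (ball z (X i)) x * norm x powr a)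
        \<longlonglongrightarrow> indicator (ball z R) x * norm x powr a"
      by (rule tendsto_eventually)
  qed
  show "(\<lambda>i. ball_norm_powr_integral a z (X i)) \<longlonglongrightarrow> ball_norm_powr_integral a z R"
    unfolding ball_norm_powr_integral_def
  proof (rule integral_dominated_convergence[OF _ _ integrable_ball_norm_powr[OF a, of z "K + 1"] AE_conv])
    show "AE x in lborel. norm (indicator (ball z (X i)) x * norm x powr a)
        \<le> indicator (ball z (K + 1)) x * norm x powr a" for i
      using K[of i] by (intro AE_I2) (auto simp: indicator_def)
  qed (fact borel_measurable_ball_norm_powr)+
qed

subsection \<open>The model radius function\<close>

text \<open>With \<open>b = \<gamma> - \<beta>\<close> and \<open>r = |x0|\<close>, \<open>rho_model\<close> is the size of \<open>\<rho>\<close> and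
  \<open>rho_model_inv\<close> the expression of the theorem (note \<open>2 - b = \<sigma>\<close>).\<close>
definition rho_model :: "real \<Rightarrow> real \<Rightarrow> real \<Rightarrow> real" where
  "rho_model b r R = R powr 2 * max R r powr (- b)"

definition rho_model_inv :: "real \<Rightarrow> real \<Rightarrow> real \<Rightarrow> real" where
  "rho_model_inv b r s = s powr (1 / 2) * max (s powr (1 / (2 - b))) r powr (b / 2)"

lemma rho_model_pos: "0 < R \<Longrightarrow> 0 < rho_model b r R"
  by (simp add: rho_model_def)

lemma rho_model_inv_pos:
  assumes "0 < s"
  shows "0 < rho_model_inv b r s"
proof -
  have "0 < max (s powr (1 / (2 - b))) r" using assms by (simp add: less_max_iff_disj)
  then show ?thesis using assms by (simp add: rho_model_inv_def)
qed

lemma rho_model_inv_eq_small_radius: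
  assumes "b < 2" "0 < s" "r \<le> s powr (1 / (2 - b))"
  shows "rho_model_inv b r s = s powr (1 / (2 - b))"
proof -
  have "rho_model_inv b r s = s powr (1 / 2 + 1 / (2 - b) * (b / 2))"
    using assms by (simp add: rho_model_inv_def powr_powr powr_add)
  also have "1 / 2 + 1 / (2 - b) * (b / 2) = 1 / (2 - b)"
    using assms(1) by (simp add: field_simps)
  finally show ?thesis .
qed

lemma rho_model_rho_model_inv:
  assumes b: "b < 2" and r: "0 \<le> r" and s: "0 < s"
  shows "rho_model b r (rho_model_inv b r s) = s"
proof (cases "r \<le> s powr (1 / (2 - b))")
  case True
  have "rho_model b r (rho_model_inv b r s)
      = (s powr (1 / (2 - b))) powr 2 * (s powr (1 / (2 - b))) powr (- b)"
    unfolding rho_model_def rho_model_inv_eq_small_radius[OF b s True] max_absorb1[OF True] ..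
  also have "\<dots> = (s powr (1 / (2 - b))) powr (2 - b)"
    by (subst powr_add[symmetric]) simp
  also have "\<dots> = s" using b s by (simp add: powr_powr)
  finally show ?thesis .
next
  case False
  then have "0 < r" using s by (smt (verit) powr_ge_zero)
  have "s = (s powr (1 / (2 - b))) powr (2 - b)" using b s by (simp add: powr_powr)
  also have "\<dots> < r powr (2 - b)" using False b s by (intro powr_less_mono2) auto
  finally have "s powr (1 / 2) < (r powr (2 - b)) powr (1 / 2)"
    using s by (intro powr_less_mono2) auto
  then have "rho_model_inv b r s < r powr ((2 - b) / 2) * r powr (b / 2)"
    using False \<open>0 < r\<close> by (simp add: rho_model_inv_def powr_powr)
  also have "\<dots> = r" using \<open>0 < r\<close> by (simp add: powr_add[symmetric] field_simps)
  finally show ?thesis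
    using False \<open>0 < r\<close> s
    by (simp add: rho_model_def rho_model_inv_def powr_mult powr_powr powr_add[symmetric])
qed

lemma rho_model_dilation:
  assumes r: "0 \<le> r" and R: "0 < R" and K: "1 \<le> K"
  shows "K powr min 2 (2 - b) * rho_model b r R \<le> rho_model b r (K * R)"
proof -
  have "0 < max R r" using R by simp
  have KR: "(K * R) powr 2 = K powr 2 * R powr 2" using K R by (simp add: powr_mult)
  show ?thesis
  proof (cases "0 \<le> b")
    case True
    have "max (K * R) r \<le> K * max R r"
      using K R r by (auto simp: max_def) (smt (verit) mult_le_cancel_right1 mult_left_mono)+
    then have "(K * max R r) powr (- b) \<le> max (K * R) r powr (- b)"
      using True K R by (intro powr_mono2') (auto simp: less_max_iff_disj)
    then have "K powr (2 - b) * rho_model b r R \<le> rho_model b r (K * R)"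
      using K R by (simp add: rho_model_def KR powr_mult powr_diff powr_minus divide_inverse
          algebra_simps mult_left_mono)
    moreover have "K powr min 2 (2 - b) \<le> K powr (2 - b)"
      using K by (intro powr_mono) auto
    ultimately show ?thesis
      by (smt (verit) mult_right_mono rho_model_pos R)
  next
    case False
    have "max R r \<le> max (K * R) r"
      using K R by (auto simp: max_def) (smt (verit) mult_le_cancel_right1)+
    then have "max R r powr (- b) \<le> max (K * R) r powr (- b)"
      using False \<open>0 < max R r\<close> by (intro powr_mono2) auto
    then have "K powr 2 * rho_model b r R \<le> rho_model b r (K * R)"
      using K by (simp add: rho_model_def KR mult_left_mono)
    moreover have "K powr min 2 (2 - b) \<le> K powr 2"
      using K by (intro powr_mono) auto
    ultimately show ?thesis
      by (smt (verit) mult_right_mono rho_model_pos R)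
  qed
qed

lemma rho_model_mono:
  assumes b: "b < 2" and r: "0 \<le> r" and R: "0 < R" "R \<le> R'"
  shows "rho_model b r R \<le> rho_model b r R'"
proof -
  have "1 \<le> (R' / R) powr min 2 (2 - b)"
    using R b by (intro ge_one_powr_ge_zero) auto
  then have "rho_model b r R \<le> (R' / R) powr min 2 (2 - b) * rho_model b r R"
    using rho_model_pos[OF R(1)] by simp
  also have "\<dots> \<le> rho_model b r R'"
    using rho_model_dilation[OF r R(1), of "R' / R" b] R by simp
  finally show ?thesis .
qed

lemma rho_model_dilation_le:
  assumes b: "b < 2" and r: "0 \<le> r" and R: "0 < R" and K: "1 \<le> K" "K * R \<le> R'"
  shows "K powr min 2 (2 - b) * rho_model b r R \<le> rho_model b r R'"
proof -
  have "K powr min 2 (2 - b) * rho_model b r R \<le> rho_model b r (K * R)"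
    using r R K(1) by (rule rho_model_dilation)
  also have "\<dots> \<le> rho_model b r R'"
    using R K by (intro rho_model_mono[OF b r]) auto
  finally show ?thesis .
qed

text \<open>The exponent \<open>min 2 (2 - b)\<close> in the dilation bound is positive, so a large dilation
  factor \<open>\<kappa>\<close> beats the comparison constants \<open>A\<close> and \<open>B\<close>.\<close>
lemma rho_model_inv_comparable:
  assumes b: "b < 2" and A: "0 < A" and B: "0 < B"
  shows "\<exists>\<kappa>>0. \<forall>r R s. 0 \<le> r \<longrightarrow> 0 < R \<longrightarrow>
    A * rho_model b r R \<le> s \<longrightarrow> s \<le> B * rho_model b r R \<longrightarrow>
    inverse \<kappa> * rho_model_inv b r s \<le> R \<and> R \<le> \<kappa> * rho_model_inv b r s"
proof -
  define m where "m = min 2 (2 - b)"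
  define M where "M = 1 / A + B + 1"
  define \<kappa> where "\<kappa> = M powr (1 / m)"
  have m: "0 < m" using b by (simp add: m_def)
  have M: "1 < M" "1 < A * M" "B < M"
    using A B by (auto simp: M_def field_simps add_pos_pos)
  have \<kappa>: "1 \<le> \<kappa>" "\<kappa> powr m = M"
    using M m by (auto simp: \<kappa>_def powr_powr ge_one_powr_ge_zero)
  have "inverse \<kappa> * rho_model_inv b r s \<le> R \<and> R \<le> \<kappa> * rho_model_inv b r s"
    if r: "0 \<le> r" and R: "0 < R"
      and lower: "A * rho_model b r R \<le> s" and upper: "s \<le> B * rho_model b r R" for r R s
  proof -
    have "0 < rho_model b r R" using R by (rule rho_model_pos)
    then have s: "0 < s" using lower A by (smt (verit) mult_pos_pos)
    define T where "T = rho_model_inv b r s"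
    have T: "0 < T" "rho_model b r T = s"
      unfolding T_def using rho_model_inv_pos[OF s] rho_model_rho_model_inv[OF b r s] by auto
    have dilate: "M * rho_model b r R1 \<le> rho_model b r R2" if "0 < R1" "\<kappa> * R1 \<le> R2" for R1 R2
      using rho_model_dilation_le[OF b r that(1) \<kappa>(1) that(2)] \<kappa>(2) by (simp add: m_def)
    have "R \<le> \<kappa> * T"
    proof (rule ccontr)
      assume "\<not> R \<le> \<kappa> * T"
      then have "M * s \<le> rho_model b r R" using dilate[OF T(1), of R] T(2) by simp
      then have "A * M * s \<le> s" using lower A by (smt (verit) mult.assoc mult_left_mono)
      with M(2) s show False by (smt (verit) mult_less_cancel_right1)
    qed
    moreover have "T \<le> \<kappa> * R"
    proof (rule ccontr)
      assume "\<not> T \<le> \<kappa> * R"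
      then have "M * rho_model b r R \<le> s" using dilate[OF R, of T] T(2) by simp
      with upper M(3) \<open>0 < rho_model b r R\<close> show False by (smt (verit) mult_strict_right_mono)
    qed
    ultimately show ?thesis
      using \<kappa> by (simp add: T_def field_simps)
  qed
  moreover have "0 < \<kappa>" using \<kappa> by simp
  ultimately show ?thesis by blast
qed

lemma rho_model_inv_le_of_nonpos:
  assumes b: "b \<le> 0" and s: "0 < s"
  shows "rho_model_inv b r s \<le> s powr (1 / (2 - b))"
proof -
  have "rho_model_inv b r s \<le> rho_model_inv b 0 s"
    unfolding rho_model_inv_def using b s
    by (intro mult_left_mono powr_mono2') (auto simp: less_max_iff_disj)
  also have "\<dots> = s powr (1 / (2 - b))"
    using b s by (intro rho_model_inv_eq_small_radius) auto
  finally show ?thesis .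
qed

lemma rho_model_inv_le_of_nonneg:
  assumes "0 \<le> b" "b < 2" "0 < s" "s \<le> t" "r \<le> r'"
  shows "rho_model_inv b r s \<le> s powr (1 / 2) * max (t powr (1 / (2 - b))) r' powr (b / 2)"
proof -
  have "s powr (1 / (2 - b)) \<le> t powr (1 / (2 - b))"
    using assms by (intro powr_mono2) auto
  then show ?thesis
    unfolding rho_model_inv_def using assms
    by (intro mult_left_mono powr_mono2) (auto simp: le_max_iff_disj)
qed

subsection \<open>The weighted radius function and its inverse\<close>

lemma ex1_pos_preimage_strict_mono_on:
  fixes f :: "real \<Rightarrow> real"
  assumes mono: "strict_mono_on {0<..} f" and cont: "continuous_on {0<..} f"
    and R1: "0 < R1" "f R1 \<le> s" and R2: "0 < R2" "s \<le> f R2"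
  shows "\<exists>!R. 0 < R \<and> f R = s"
proof -
  have "R1 \<le> R2"
  proof (rule ccontr)
    assume "\<not> R1 \<le> R2"
    then have "f R2 < f R1" using strict_mono_onD[OF mono, of R2 R1] R1 R2 by simp
    with R1 R2 show False by simp
  qed
  moreover have "continuous_on {R1..R2} f"
    using R1 by (intro continuous_on_subset[OF cont]) auto
  ultimately obtain R where R: "R1 \<le> R" "f R = s"
    using IVT'[of f R1 s R2] R1 R2 by blast
  show ?thesis
  proof (rule ex1I[of _ R])
    show "0 < R \<and> f R = s" using R R1 by simp
  next
    fix R' assume "0 < R' \<and> f R' = s"
    then show "R' = R"
      using inj_onD[OF strict_mono_on_imp_inj_on[OF mono], of R' R] R R1 by simp
  qed
qed

lemma rho_gb_eq_ball_norm_powr_integral: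
  fixes \<gamma> \<beta> :: real
  shows "rho_gb \<gamma> \<beta> (x0::real^'n::finite) R
    = ball_norm_powr_integral ((\<beta> - \<gamma>) * CARD('n) / 2) x0 R powr (2 / CARD('n))"
  unfolding rho_gb_def ball_norm_powr_integral_def set_lebesgue_integral_def by simp

lemma rho_gb_weight_exponent_gt:
  fixes \<gamma> \<beta> :: real
  assumes "\<gamma> - 2 < \<beta>"
  shows "- real DIM(real^'n::finite) < (\<beta> - \<gamma>) * CARD('n) / 2"
proof -
  have "0 < (\<beta> - \<gamma> + 2) * CARD('n)" using assms by simp
  then show ?thesis by (simp add: algebra_simps)
qed

lemma rho_gb_comparable:
  fixes \<gamma> \<beta> :: real
  assumes "\<gamma> - 2 < \<beta>"
  shows "\<exists>A>0. \<exists>B>0. \<forall>(x0::real^'n::finite) R. 0 < R \<longrightarrow>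
    A * rho_model (\<gamma> - \<beta>) (norm x0) R \<le> rho_gb \<gamma> \<beta> x0 R \<and>
    rho_gb \<gamma> \<beta> x0 R \<le> B * rho_model (\<gamma> - \<beta>) (norm x0) R"
proof -
  define n where "n = CARD('n)"
  define a where "a = (\<beta> - \<gamma>) * n / 2"
  define p where "p = 2 / real n"
  have a: "- real DIM(real^'n) < a"
    using rho_gb_weight_exponent_gt[OF assms] by (simp add: a_def n_def)
  have p: "0 < p" "real n * p = 2" "a * p = - (\<gamma> - \<beta>)"
    by (auto simp: p_def a_def n_def)
  have DIM: "DIM(real^'n) = n" by (simp add: n_def)
  obtain cL where cL: "0 < cL" "\<And>(z::real^'n) R. 0 < R \<Longrightarrow>
      cL * (R ^ n * max R (norm z) powr a) \<le> ball_norm_powr_integral a z R"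
    using ball_norm_powr_integral_lower[OF a] unfolding DIM by blast
  obtain cU where cU: "0 < cU" "\<And>(z::real^'n) R. 0 < R \<Longrightarrow>
      ball_norm_powr_integral a z R \<le> cU * (R ^ n * max R (norm z) powr a)"
    using ball_norm_powr_integral_upper[OF a] unfolding DIM by blast
  have model: "(c * (R ^ n * max R r powr a)) powr p = c powr p * rho_model (\<gamma> - \<beta>) r R"
    if "0 < c" "0 < R" for c R r
  proof -
    have "R ^ n = R powr real n" using \<open>0 < R\<close> by (rule powr_realpow[symmetric])
    then have "(R ^ n) powr p = R powr 2" by (simp only: powr_powr p(2))
    moreover have "(max R r powr a) powr p = max R r powr (- (\<gamma> - \<beta>))"
      by (simp only: powr_powr p(3))
    ultimately show ?thesis
      using that by (simp add: rho_model_def powr_mult)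
  qed
  have rho: "rho_gb \<gamma> \<beta> x0 R = ball_norm_powr_integral a x0 R powr p" for x0 :: "real^'n" and R
    unfolding rho_gb_eq_ball_norm_powr_integral a_def p_def n_def ..
  have "cL powr p * rho_model (\<gamma> - \<beta>) (norm x0) R \<le> rho_gb \<gamma> \<beta> x0 R \<and>
      rho_gb \<gamma> \<beta> x0 R \<le> cU powr p * rho_model (\<gamma> - \<beta>) (norm x0) R"
    if R: "0 < R" for x0 :: "real^'n" and R
    unfolding rho model[OF cL(1) R, symmetric] model[OF cU(1) R, symmetric]
    using cL cU R p ball_norm_powr_integral_pos[OF a R, of x0]
    by (intro conjI powr_mono2) (auto intro: less_imp_le)
  moreover have "0 < cL powr p" "0 < cU powr p" using cL cU by auto
  ultimately show ?thesis by blast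
qed
lemma rho_gb_strict_mono_on:
  fixes \<gamma> \<beta> :: real
  assumes "\<gamma> - 2 < \<beta>"
  shows "strict_mono_on {0<..} (rho_gb \<gamma> \<beta> (x0::real^'n::finite))"
proof (rule strict_mono_onI)
  have a: "- real DIM(real^'n) < (\<beta> - \<gamma>) * CARD('n) / 2"
    using assms by (rule rho_gb_weight_exponent_gt)
  fix R R' :: real assume "R \<in> {0<..}" "R' \<in> {0<..}" "R < R'"
  then show "rho_gb \<gamma> \<beta> x0 R < rho_gb \<gamma> \<beta> x0 R'"
    unfolding rho_gb_eq_ball_norm_powr_integral
    using ball_norm_powr_integral_strict_mono[OF a] ball_norm_powr_integral_pos[OF a]
    by (intro powr_less_mono2) (auto intro: less_imp_le)
qed

lemma continuous_on_rho_gb: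
  fixes \<gamma> \<beta> :: real
  assumes "\<gamma> - 2 < \<beta>"
  shows "continuous_on {0<..} (rho_gb \<gamma> \<beta> (x0::real^'n::finite))"
proof -
  have a: "- real DIM(real^'n) < (\<beta> - \<gamma>) * CARD('n) / 2"
    using assms by (rule rho_gb_weight_exponent_gt)
  have "ball_norm_powr_integral ((\<beta> - \<gamma>) * CARD('n) / 2) x0 R \<noteq> 0" if "R \<in> {0<..}" for R
    using ball_norm_powr_integral_pos[OF a, of R x0] that by simp
  then show ?thesis
    unfolding rho_gb_eq_ball_norm_powr_integral
    by (intro continuous_on_powr continuous_on_const continuous_at_imp_continuous_on ballI
        isCont_ball_norm_powr_integral a)
qed

lemma rho_gb_rho_gb_inv:
  fixes \<gamma> \<beta> :: real
  assumes "\<gamma> - 2 < \<beta>" and s: "0 < s"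
  shows "0 < rho_gb_inv \<gamma> \<beta> x0 s \<and> rho_gb \<gamma> \<beta> (x0::real^'n::finite) (rho_gb_inv \<gamma> \<beta> x0 s) = s"
proof -
  obtain A B where A: "0 < A" and B: "0 < B" and bounds: "\<And>R. 0 < R \<Longrightarrow>
      A * rho_model (\<gamma> - \<beta>) (norm x0) R \<le> rho_gb \<gamma> \<beta> x0 R \<and>
      rho_gb \<gamma> \<beta> x0 R \<le> B * rho_model (\<gamma> - \<beta>) (norm x0) R"
    using rho_gb_comparable[OF assms(1)] by blast
  have b: "\<gamma> - \<beta> < 2" using assms(1) by simp
  define R1 where "R1 = rho_model_inv (\<gamma> - \<beta>) (norm x0) (s / B)"
  define R2 where "R2 = rho_model_inv (\<gamma> - \<beta>) (norm x0) (s / A)"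
  have R: "0 < R1" "0 < R2"
    unfolding R1_def R2_def using s A B by (auto intro: rho_model_inv_pos)
  have "rho_gb \<gamma> \<beta> x0 R1 \<le> s"
    using bounds[OF R(1)] rho_model_rho_model_inv[OF b, of "norm x0" "s / B"] s B
    by (simp add: R1_def)
  moreover have "s \<le> rho_gb \<gamma> \<beta> x0 R2"
    using bounds[OF R(2)] rho_model_rho_model_inv[OF b, of "norm x0" "s / A"] s A
    by (simp add: R2_def)
  ultimately have "\<exists>!R. 0 < R \<and> rho_gb \<gamma> \<beta> x0 R = s"
    using R by (intro ex1_pos_preimage_strict_mono_on rho_gb_strict_mono_on continuous_on_rho_gb assms(1))
  then show ?thesis
    unfolding rho_gb_inv_def by (rule theI')
qed

lemma rho_gb_inv_comparable:
  fixes \<gamma> \<beta> :: real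
  assumes "\<gamma> - 2 < \<beta>"
  shows "\<exists>\<kappa>>0. \<forall>(x0::real^'n::finite) s. 0 < s \<longrightarrow>
    inverse \<kappa> * rho_model_inv (\<gamma> - \<beta>) (norm x0) s \<le> rho_gb_inv \<gamma> \<beta> x0 s \<and>
    rho_gb_inv \<gamma> \<beta> x0 s \<le> \<kappa> * rho_model_inv (\<gamma> - \<beta>) (norm x0) s"
proof -
  obtain A B where A: "0 < A" and B: "0 < B" and bounds: "\<And>(x0::real^'n) R. 0 < R \<Longrightarrow>
      A * rho_model (\<gamma> - \<beta>) (norm x0) R \<le> rho_gb \<gamma> \<beta> x0 R \<and>
      rho_gb \<gamma> \<beta> x0 R \<le> B * rho_model (\<gamma> - \<beta>) (norm x0) R"
    using rho_gb_comparable[OF assms] by blast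
  obtain \<kappa> where "0 < \<kappa>" and \<kappa>: "\<And>r R s. 0 \<le> r \<Longrightarrow> 0 < R \<Longrightarrow>
      A * rho_model (\<gamma> - \<beta>) r R \<le> s \<Longrightarrow> s \<le> B * rho_model (\<gamma> - \<beta>) r R \<Longrightarrow>
      inverse \<kappa> * rho_model_inv (\<gamma> - \<beta>) r s \<le> R \<and> R \<le> \<kappa> * rho_model_inv (\<gamma> - \<beta>) r s"
    using rho_model_inv_comparable[of "\<gamma> - \<beta>" A B] assms A B by auto
  have "inverse \<kappa> * rho_model_inv (\<gamma> - \<beta>) (norm x0) s \<le> rho_gb_inv \<gamma> \<beta> x0 s \<and>
      rho_gb_inv \<gamma> \<beta> x0 s \<le> \<kappa> * rho_model_inv (\<gamma> - \<beta>) (norm x0) s"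
    if "0 < s" for x0 :: "real^'n" and s
    using rho_gb_rho_gb_inv[OF assms that, of x0] bounds[of "rho_gb_inv \<gamma> \<beta> x0 s" x0]
    by (intro \<kappa>) auto
  with \<open>0 < \<kappa>\<close> show ?thesis by blast
qed

theorem lemma5p3:
  fixes \<gamma> \<beta> \<sigma> :: real and N :: nat
  assumes hN: "CARD('n::finite) = N" "N \<ge> 3"
    and h\<gamma>: "\<gamma> < real N"
    and h\<beta>: "\<gamma> - 2 < \<beta>" "\<beta> \<le> (real N - 2) / real N * \<gamma>"
    and h\<sigma>: "\<sigma> = 2 + \<beta> - \<gamma>"
  shows "\<exists>\<kappa>>0.
    (\<forall>(x0 :: real ^ 'n) s. 0 < s \<longrightarrow>
        inverse \<kappa> * s powr (1/2) * (max (s powr (1/\<sigma>)) (norm x0)) powr ((\<gamma> - \<beta>) / 2)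
          \<le> rho_gb_inv \<gamma> \<beta> x0 s
      \<and> rho_gb_inv \<gamma> \<beta> x0 s
          \<le> \<kappa> * s powr (1/2) * (max (s powr (1/\<sigma>)) (norm x0)) powr ((\<gamma> - \<beta>) / 2))
  \<and> (\<forall>(\<Omega> :: (real ^ 'n) set) T x0 s. open \<Omega> \<longrightarrow> 0 < T \<longrightarrow> x0 \<in> \<Omega> \<longrightarrow> 0 < s \<longrightarrow> s \<le> T \<longrightarrow>
        (\<sigma> \<ge> 2 \<longrightarrow> rho_gb_inv \<gamma> \<beta> x0 s \<le> \<kappa> * s powr (1/\<sigma>))
      \<and> (0 < \<sigma> \<and> \<sigma> < 2 \<and> bounded \<Omega> \<longrightarrow>
           rho_gb_inv \<gamma> \<beta> x0 s
             \<le> \<kappa> * s powr (1/2) * (max (T powr (1/\<sigma>)) (SUP z\<in>\<Omega>. norm z)) powr ((\<gamma> - \<beta>) / 2)))"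
proof -
  have \<sigma>: "2 - (\<gamma> - \<beta>) = \<sigma>" using h\<sigma> by simp
  obtain \<kappa> where "0 < \<kappa>" and \<kappa>: "\<And>(x0::real^'n) s. 0 < s \<Longrightarrow>
      inverse \<kappa> * rho_model_inv (\<gamma> - \<beta>) (norm x0) s \<le> rho_gb_inv \<gamma> \<beta> x0 s \<and>
      rho_gb_inv \<gamma> \<beta> x0 s \<le> \<kappa> * rho_model_inv (\<gamma> - \<beta>) (norm x0) s"
    using rho_gb_inv_comparable[OF h\<beta>(1)] by blast
  have "rho_gb_inv \<gamma> \<beta> x0 s \<le> \<kappa> * s powr (1/\<sigma>)" if "0 < s" "2 \<le> \<sigma>" for x0 :: "real^'n" and s
    using \<kappa>[OF \<open>0 < s\<close>, of x0] rho_model_inv_le_of_nonpos[of "\<gamma> - \<beta>" s "norm x0"] that \<sigma> \<open>0 < \<kappa>\<close>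
    by (smt (verit) mult_left_mono)
  moreover have "rho_gb_inv \<gamma> \<beta> x0 s
      \<le> \<kappa> * s powr (1/2) * (max (T powr (1/\<sigma>)) (SUP z\<in>\<Omega>. norm z)) powr ((\<gamma> - \<beta>) / 2)"
    if "0 < s" "s \<le> T" "x0 \<in> \<Omega>" "bounded \<Omega>" "0 < \<sigma>" "\<sigma> < 2" for x0 :: "real^'n" and s T \<Omega>
  proof -
    have "norm x0 \<le> (SUP z\<in>\<Omega>. norm z)"
      using that by (intro cSUP_upper) (auto simp: bdd_above_norm)
    then have "rho_model_inv (\<gamma> - \<beta>) (norm x0) s
        \<le> s powr (1/2) * (max (T powr (1/\<sigma>)) (SUP z\<in>\<Omega>. norm z)) powr ((\<gamma> - \<beta>) / 2)"
      using rho_model_inv_le_of_nonneg[of "\<gamma> - \<beta>" s T "norm x0"] that \<sigma> by simp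
    then show ?thesis
      using \<kappa>[OF \<open>0 < s\<close>, of x0] \<open>0 < \<kappa>\<close> by (smt (verit) mult.assoc mult_left_mono)
  qed
  ultimately show ?thesis
    using \<open>0 < \<kappa>\<close> \<kappa> unfolding rho_model_inv_def \<sigma> by (auto simp: mult.assoc)
qed

end
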